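(* Let $\mathbb{F}_q$ be a finite field and $m\ge2$. Let $X_1,\dots,X_{m-1}$ be independent uniformly random elements of $\mathbb{F}_q$. Fix arbitrary functions $f_1,\dots,f_m:\mathbb{F}_q^{m-1}\to\mathbb{F}_q$, where for $k\le m-1$ the function $f_k$ is evaluated as $f_k(X_{[m-1]\setminus\{k\}},y)$ (its arguments being all $X_i$ with $i\in\{1,\dots,m-1\}\setminus\{k\}$ together with $y\in\mathbb{F}_q$), and $f_m$ is evaluated as $f_m(X_1,\dots,X_{m-1})$. For $y\in\mathbb{F}_q$ let $F_y$ be the event $$X_1X_2\cdots X_{m-1}\,y=\sum_{k=1}^{m-1}f_k(X_{[m-1]\setminus\{k\}},y)+f_m(X_1,\dots,X_{m-1}).$$ Then for all $y\neq z$ in $\mathbb{F}_q$, $\Pr[F_y\wedge F_z]\le\omega_{m-1}$, where $\omega_{m-1}$ is the optimal winning probability of the $(m-1)$-player game defined below (over the same field $\mathbb{F}_q$).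
   Context: For $r\ge1$, the $r$-player "Number on the Forehead" multiplication game over $\mathbb{F}_q$: inputs $X_1,\dots,X_r$ are independent and uniform on $\mathbb{F}_q$; player $k$ sees all inputs except $X_k$ (denoted $X_{[r]\setminus\{k\}}$) and outputs $Y_k=f_k(X_{[r]\setminus\{k\}})$ for a function $f_k:\mathbb{F}_q^{r-1}\to\mathbb{F}_q$ (for $r=1$ this is a constant). The game is won iff $\prod_{k=1}^rX_k=\sum_{k=1}^rY_k$. Define $\omega_r(f_1,\dots,f_r)=\Pr[\prod_{k=1}^rX_k=\sum_{k=1}^rf_k(X_{[r]\setminus\{k\}})]$ and $\omega_r=\max_{f_1,\dots,f_r}\omega_r(f_1,\dots,f_r)$, the maximum over all functions $\mathbb{F}_q^{r-1}\to\mathbb{F}_q$. *)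

theory Defs
  imports Complex_Main
begin

text \<open>Inputs X_1..X_r are represented (0-indexed) as a list of length r over a finite
field 'a.  Player k (k < r) sees the list with its k-th entry deleted, i.e. a list of
length r-1, which represents an element of F_q^(r-1).\<close>

definition del_nth :: "nat \<Rightarrow> 'a list \<Rightarrow> 'a list" where
  "del_nth k xs = take k xs @ drop (Suc k) xs"

definition nof_win_prob :: "nat \<Rightarrow> (nat \<Rightarrow> 'a::{finite,field} list \<Rightarrow> 'a) \<Rightarrow> real" where
  "nof_win_prob r f =
     real (card {xs :: 'a list. length xs = r \<and>
                  prod_list xs = (\<Sum>k<r. f k (del_nth k xs))})
     / real (card (UNIV :: 'a set) ^ r)"

definition nof_omega :: "'a::{finite,field} itself \<Rightarrow> nat \<Rightarrow> real" where
  "nof_omega (_ :: 'a itself) r = Max (range (\<lambda>f :: nat \<Rightarrow> 'a list \<Rightarrow> 'a. nof_win_prob r f))"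

end

theory Submission
  imports Defs
begin

text \<open>Subtracting the two winning equations eliminates the common term \<open>g xs\<close> and leaves
  \<open>(y - z) \<cdot> X\<^sub>1\<cdots>X\<^sub>m\<^sub>-\<^sub>1\<close> as a sum of terms each missing one input; dividing by \<open>y - z\<close> turns
  the players' differences into a strategy profile for the \<open>(m-1)\<close>-player game that wins on
  every outcome in \<open>F\<^sub>y \<and> F\<^sub>z\<close>.\<close>

lemma finite_range_nof_win_prob:
  "finite (range (\<lambda>f :: nat \<Rightarrow> 'a::{finite,field} list \<Rightarrow> 'a. nof_win_prob r f))"
proof -
  let ?L = "{xs :: 'a list. length xs = r}"
  have fin: "finite ?L" using finite_lists_length_eq[of "UNIV :: 'a set" r] by simp
  have "range (\<lambda>f :: nat \<Rightarrow> 'a list \<Rightarrow> 'a. nof_win_prob r f)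
          \<subseteq> (\<lambda>k. real k / real (card (UNIV :: 'a set) ^ r)) ` {..card ?L}"
  proof
    fix x assume "x \<in> range (\<lambda>f :: nat \<Rightarrow> 'a list \<Rightarrow> 'a. nof_win_prob r f)"
    then obtain f :: "nat \<Rightarrow> 'a list \<Rightarrow> 'a" where x: "x = nof_win_prob r f" by auto
    have "card {xs :: 'a list. length xs = r \<and> prod_list xs = (\<Sum>k<r. f k (del_nth k xs))}
            \<le> card ?L"
      by (rule card_mono[OF fin]) auto
    then show "x \<in> (\<lambda>k. real k / real (card (UNIV :: 'a set) ^ r)) ` {..card ?L}"
      unfolding x nof_win_prob_def by auto
  qed
  then show ?thesis by (rule finite_subset) simp
qed

lemma nof_win_prob_le_nof_omega:
  fixes f :: "nat \<Rightarrow> 'a::{finite,field} list \<Rightarrow> 'a"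
  shows "nof_win_prob r f \<le> nof_omega TYPE('a) r"
  unfolding nof_omega_def by (rule Max_ge[OF finite_range_nof_win_prob]) simp

definition difference_strategy ::
  "(nat \<Rightarrow> 'a::field list \<Rightarrow> 'a) \<Rightarrow> 'a \<Rightarrow> 'a \<Rightarrow> nat \<Rightarrow> 'a list \<Rightarrow> 'a" where
  "difference_strategy f y z k w = (f k (w @ [y]) - f k (w @ [z])) / (y - z)"

lemma wins_difference_strategy:
  fixes f :: "nat \<Rightarrow> 'a::field list \<Rightarrow> 'a"
  assumes "y \<noteq> z"
    and win_y: "prod_list xs * y = (\<Sum>k<r. f k (del_nth k xs @ [y])) + c"
    and win_z: "prod_list xs * z = (\<Sum>k<r. f k (del_nth k xs @ [z])) + c"
  shows "prod_list xs = (\<Sum>k<r. difference_strategy f y z k (del_nth k xs))"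
proof -
  have "prod_list xs * (y - z)
          = (\<Sum>k<r. f k (del_nth k xs @ [y]) - f k (del_nth k xs @ [z]))"
    using win_y win_z by (simp add: algebra_simps sum_subtractf)
  then show ?thesis
    using \<open>y \<noteq> z\<close>
    by (simp add: difference_strategy_def field_simps flip: sum_divide_distrib)
qed

theorem propositionB1:
  fixes m :: nat
    and f :: "nat \<Rightarrow> 'a::{finite,field} list \<Rightarrow> 'a"
    and g :: "'a list \<Rightarrow> 'a"
    and y z :: 'a
  assumes "m \<ge> 2"
    and "y \<noteq> z"
  shows "real (card {xs :: 'a list. length xs = m - 1 \<and>
            prod_list xs * y = (\<Sum>k<m - 1. f k (del_nth k xs @ [y])) + g xs \<and>
            prod_list xs * z = (\<Sum>k<m - 1. f k (del_nth k xs @ [z])) + g xs})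
         / real (card (UNIV :: 'a set) ^ (m - 1))
       \<le> nof_omega TYPE('a) (m - 1)"
  (is "real (card ?S) / ?D \<le> _")
proof -
  \<comment> \<open>The argument works for every \<open>m\<close>.\<close>
  let ?h = "difference_strategy f y z"
  let ?W = "{xs :: 'a list. length xs = m - 1 \<and>
              prod_list xs = (\<Sum>k<m - 1. ?h k (del_nth k xs))}"
  have "finite ?W"
    by (rule finite_subset[OF _ finite_lists_length_eq[of "UNIV :: 'a set" "m - 1"]]) auto
  then have "card ?S \<le> card ?W"
    using wins_difference_strategy[OF \<open>y \<noteq> z\<close>] by (intro card_mono) auto
  then have "real (card ?S) / ?D \<le> nof_win_prob (m - 1) ?h"
    unfolding nof_win_prob_def by (simp add: divide_right_mono)
  also have "\<dots> \<le> nof_omega TYPE('a) (m - 1)"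
    by (rule nof_win_prob_le_nof_omega)
  finally show ?thesis .
qed

end
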